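(* Let $n\ge1$ and let $S\subseteq\mathbb{Z}_{2^n}$ with $|S|=2^{n-1}+1$. For every integer $a$ with $1\le a\le n$, $$|C(a,a,a+)|\ge\max\{|S_a|(|S_{a+}|-|L_a|+|S_a|),\;|S_{a+}|(2|S_a|-|L_a|),\;0\}.$$
   Context: Layers: for $1\le i\le n$, $L_i=\{x\in\mathbb{Z}_{2^n}: x\equiv 2^{i-1}\pmod{2^i}\}$, $L_{n+1}=\{0\}$. $S_i=S\cap L_i$ and $S_{i+}=S\cap(L_{i+1}\cup\dots\cup L_{n+1})$. $C(a,a,a+)$ is the set of ordered triples $(x,y,z)$ with $x+y=z$ in $\mathbb{Z}_{2^n}$, $x\in S_a$, $y\in S_a$, $z\in S_{a+}$. *)

theory Defs
  imports Main
begin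

text \<open>Z_{2^n} is represented by the natural numbers {0..<2^n}, addition modulo 2^n.\<close>

definition ZN :: "nat \<Rightarrow> nat set" where
  "ZN n = {0..<2^n}"

definition layer :: "nat \<Rightarrow> nat \<Rightarrow> nat set" where
  "layer n i = (if 1 \<le> i \<and> i \<le> n then {x \<in> ZN n. x mod 2^i = 2^(i-1)}
                else if i = n + 1 then {0} else {})"

definition S_layer :: "nat \<Rightarrow> nat set \<Rightarrow> nat \<Rightarrow> nat set" where
  "S_layer n S i = S \<inter> layer n i"

definition S_above :: "nat \<Rightarrow> nat set \<Rightarrow> nat \<Rightarrow> nat set" where
  "S_above n S i = S \<inter> (\<Union>j\<in>{i+1..n+1}. layer n j)"

definition C_aaa :: "nat \<Rightarrow> nat set \<Rightarrow> nat \<Rightarrow> (nat \<times> nat \<times> nat) set" where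
  "C_aaa n S a = {(x, y, z). x \<in> S_layer n S a \<and> y \<in> S_layer n S a \<and>
                   z \<in> S_above n S a \<and> (x + y) mod 2^n = z}"

end

theory Submission
  imports Defs
begin

text \<open>
  Every \<open>x \<in> L\<^sub>a\<close> is \<open>2^(a-1)\<close> modulo \<open>2^a\<close>, and every
  \<open>z \<in> S\<^sub>a\<^sub>+\<close> is divisible by \<open>2^a\<close>; since \<open>-2^(a-1) \<equiv> 2^(a-1) (mod 2^a)\<close>,
  the difference \<open>z - x\<close> lies in \<open>L\<^sub>a\<close> again. Hence for fixed \<open>x \<in> S\<^sub>a\<close> the
  translation \<open>z \<mapsto> z - x\<close> embeds \<open>S\<^sub>a\<^sub>+\<close> into \<open>L\<^sub>a\<close>, and its image meets
  \<open>S\<^sub>a\<close> in at least \<open>|S\<^sub>a| + |S\<^sub>a\<^sub>+| - |L\<^sub>a|\<close> points \<open>y\<close>, each giving the triple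
  \<open>(x, y, x + y)\<close>; summing over \<open>x\<close> gives the first bound. For fixed \<open>z \<in> S\<^sub>a\<^sub>+\<close>
  the reflection \<open>y \<mapsto> z - y\<close> maps \<open>S\<^sub>a\<close> into \<open>L\<^sub>a\<close>, its image meets \<open>S\<^sub>a\<close> in
  at least \<open>2|S\<^sub>a| - |L\<^sub>a|\<close> points, and summing over \<open>z\<close> gives the second bound.
\<close>

lemma add_mod_diff_mod_cancel:
  fixes x b N :: nat
  assumes "x < N" "b < N"
  shows "(x + (b + N - x) mod N) mod N = b"
proof -
  have "int ((x + (b + N - x) mod N) mod N) = (int x + (int b + int N - int x) mod int N) mod int N"
    using assms by (simp add: zmod_int of_nat_diff)
  also have "\<dots> = int b"
    using assms by (simp add: mod_add_right_eq)
  finally show ?thesis by linarith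
qed

lemma diff_mod_add_mod_cancel:
  fixes x y N :: nat
  assumes "x < N" "y < N"
  shows "((x + y) mod N + N - x) mod N = y"
proof -
  have "int (((x + y) mod N + N - x) mod N) = ((int x + int y) mod int N + int N - int x) mod int N"
    using assms by (simp add: zmod_int of_nat_diff trans_le_add2)
  also have "\<dots> = (int x + int y + int N - int x) mod int N"
    by (metis mod_add_left_eq mod_diff_left_eq)
  also have "\<dots> = int y"
    using assms by simp
  finally show ?thesis by linarith
qed

lemma diff_mod_diff_mod_cancel:
  fixes z y N :: nat
  assumes "z < N" "y < N"
  shows "(z + N - (z + N - y) mod N) mod N = y"
proof -
  have "(z + N - y) mod N \<le> z + N"
    using assms by (simp add: mod_le_divisor trans_le_add2)
  then have "int ((z + N - (z + N - y) mod N) mod N) = (int z + int N - (int z + int N - int y) mod int N) mod int N"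
    using assms by (simp add: zmod_int of_nat_diff)
  also have "\<dots> = (int z + int N - (int z + int N - int y)) mod int N"
    by (metis mod_diff_right_eq)
  also have "\<dots> = int y"
    using assms by simp
  finally show ?thesis by linarith
qed

lemma inj_on_diff_mod_right:
  fixes x N :: nat
  assumes "x < N"
  shows "inj_on (\<lambda>z. (z + N - x) mod N) {..<N}"
  by (rule inj_on_inverseI[where g = "\<lambda>b. (x + b) mod N"]) (simp add: assms add_mod_diff_mod_cancel)

lemma inj_on_diff_mod_left:
  fixes z N :: nat
  assumes "z < N"
  shows "inj_on (\<lambda>y. (z + N - y) mod N) {..<N}"
  by (rule inj_on_inverseI[where g = "\<lambda>w. (z + N - w) mod N"]) (simp add: assms diff_mod_diff_mod_cancel)

lemma diff_mod_mod_eq_of_double: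
  fixes m N y z :: nat
  assumes "m dvd N" "m dvd z" "y < N" "2 * (y mod m) = m"
  shows "(z + N - y) mod N mod m = y mod m"
proof -
  have "int ((z + N - y) mod N mod m) = (int z + int N - int y) mod int m"
    using assms(1,3) by (simp add: mod_mod_cancel zmod_int of_nat_diff)
  also have "\<dots> = int y mod int m"
  proof (rule iffD2[OF mod_eq_dvd_iff])
    have "2 * y = m * (2 * (y div m) + 1)"
      using assms(4) div_mult_mod_eq[of y m] by (metis add_mult_distrib2 mult.commute mult.left_commute mult.right_neutral)
    then have "int m dvd int (2 * y)" "int m dvd int z" "int m dvd int N"
      using assms(1,2) by simp_all
    then have "int m dvd int z + int N - int (2 * y)"
      by (intro dvd_diff dvd_add)
    then show "int m dvd int z + int N - int y - int y"
      by (simp add: algebra_simps)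
  qed
  finally show ?thesis by (simp flip: zmod_int)
qed

lemma layer_subset_ZN: "layer n i \<subseteq> ZN n"
  by (auto simp: layer_def ZN_def)

lemma finite_layer: "finite (layer n i)"
  using layer_subset_ZN by (rule finite_subset) (simp add: ZN_def)

lemma power_dvd_of_mem_layer:
  assumes "a < j" "x \<in> layer n j"
  shows "2^a dvd x"
proof (cases "j = n + 1")
  case True
  then show ?thesis using assms(2) by (simp add: layer_def)
next
  case False
  then have "x mod 2^j = 2^(j-1)" "1 \<le> j"
    using assms(2) by (auto simp: layer_def split: if_splits)
  moreover have "(2::nat)^a dvd 2^j" "(2::nat)^a dvd 2^(j-1)"
    using assms(1) by (simp_all add: le_imp_power_dvd)
  ultimately show ?thesis
    by (metis dvd_mod_iff)
qed

lemma S_above_subset: "S_above n S a \<subseteq> {z \<in> ZN n. 2^a dvd z}"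
proof
  fix z assume "z \<in> S_above n S a"
  then obtain j where "a < j" "z \<in> layer n j"
    by (auto simp: S_above_def Suc_le_eq)
  then show "z \<in> {z \<in> ZN n. 2^a dvd z}"
    using layer_subset_ZN power_dvd_of_mem_layer by blast
qed

lemma diff_mod_mem_layer:
  assumes "1 \<le> a" "a \<le> n" "y \<in> layer n a" "z < 2^n" "2^a dvd z"
  shows "(z + 2^n - y) mod 2^n \<in> layer n a"
proof -
  have y: "y < 2^n" "y mod 2^a = 2^(a-1)"
    using assms(1-3) by (auto simp: layer_def ZN_def)
  have "2 * (y mod 2^a) = 2^a"
    using y(2) assms(1) by (simp flip: power_Suc)
  then have "(z + 2^n - y) mod 2^n mod 2^a = 2^(a-1)"
    using diff_mod_mod_eq_of_double[of "2^a" "2^n" z y] assms(2,5) y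
    by (simp add: le_imp_power_dvd)
  then show ?thesis
    using assms(1,2) by (simp add: layer_def ZN_def)
qed

lemma card_Sigma_inter_ge:
  assumes "finite L" "A \<subseteq> L" "finite I"
    and "\<And>i. i \<in> I \<Longrightarrow> T i \<subseteq> L" "\<And>i. i \<in> I \<Longrightarrow> k \<le> card (T i)"
  shows "int (card I) * (int k + int (card A) - int (card L)) \<le> int (card (Sigma I (\<lambda>i. A \<inter> T i)))"
proof -
  have "finite A"
    using assms(2,1) by (rule finite_subset)
  have "int k + int (card A) - int (card L) \<le> int (card (A \<inter> T i))" if "i \<in> I" for i
  proof -
    have "finite (T i)"
      using assms(4)[OF that] assms(1) by (rule finite_subset)
    with \<open>finite A\<close> have "card A + card (T i) = card (A \<union> T i) + card (A \<inter> T i)"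
      by (rule card_Un_Int)
    moreover have "card (A \<union> T i) \<le> card L"
      using assms(1,2) assms(4)[OF that] by (intro card_mono) auto
    ultimately show ?thesis
      using assms(5)[OF that] by linarith
  qed
  then have "(\<Sum>i\<in>I. int k + int (card A) - int (card L)) \<le> (\<Sum>i\<in>I. int (card (A \<inter> T i)))"
    by (rule sum_mono)
  also have "\<dots> = int (card (Sigma I (\<lambda>i. A \<inter> T i)))"
    using assms(3) \<open>finite A\<close> by (simp add: card_SigmaI)
  finally show ?thesis by simp
qed

lemma card_C_aaa_ge_by_S_layer:
  fixes n a :: nat and S :: "nat set"
  assumes "1 \<le> a" "a \<le> n"
  defines "A \<equiv> S_layer n S a" and "B \<equiv> S_above n S a" and "L \<equiv> layer n a"
  shows "int (card A) * (int (card B) - int (card L) + int (card A)) \<le> int (card (C_aaa n S a))"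
proof -
  define T where "T x = {y \<in> L. (x + y) mod 2^n \<in> B}" for x
  have "L \<subseteq> ZN n" "A \<subseteq> L" "finite L"
    using layer_subset_ZN finite_layer unfolding A_def L_def S_layer_def by blast+
  have "finite A"
    using \<open>A \<subseteq> L\<close> \<open>finite L\<close> by (rule finite_subset)
  have "B \<subseteq> {..<2^n}"
    using S_above_subset[of n S a] unfolding B_def ZN_def by auto
  have B_dvd: "2^a dvd z" if "z \<in> B" for z
    using S_above_subset[of n S a] that unfolding B_def by auto
  have card_T: "card B \<le> card (T x)" if "x \<in> A" for x
  proof (rule card_inj_on_le)
    have "x \<in> L" "x < 2^n"
      using \<open>A \<subseteq> L\<close> \<open>L \<subseteq> ZN n\<close> that by (auto simp: ZN_def)
    show "inj_on (\<lambda>z. (z + 2^n - x) mod 2^n) B"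
      using inj_on_diff_mod_right[OF \<open>x < 2^n\<close>] \<open>B \<subseteq> {..<2^n}\<close> by (rule inj_on_subset)
    show "(\<lambda>z. (z + 2^n - x) mod 2^n) ` B \<subseteq> T x"
    proof
      fix w assume "w \<in> (\<lambda>z. (z + 2^n - x) mod 2^n) ` B"
      then obtain z where z: "z \<in> B" "w = (z + 2^n - x) mod 2^n"
        by blast
      have "w \<in> L"
        using diff_mod_mem_layer[OF assms(1,2)] \<open>x \<in> L\<close> B_dvd z \<open>B \<subseteq> {..<2^n}\<close>
        unfolding L_def by blast
      moreover have "(x + w) mod 2^n = z"
        using add_mod_diff_mod_cancel \<open>x < 2^n\<close> z \<open>B \<subseteq> {..<2^n}\<close> by auto
      ultimately show "w \<in> T x"
        using z(1) unfolding T_def by simp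
    qed
    show "finite (T x)"
      using \<open>finite L\<close> unfolding T_def by simp
  qed
  then have "int (card A) * (int (card B) + int (card A) - int (card L))
      \<le> int (card (Sigma A (\<lambda>x. A \<inter> T x)))"
    using \<open>finite L\<close> \<open>A \<subseteq> L\<close> \<open>finite A\<close> card_T
    by (intro card_Sigma_inter_ge) (auto simp: T_def)
  also have "\<dots> = int (card (C_aaa n S a))"
  proof -
    have "C_aaa n S a = (\<lambda>(x, y). (x, y, (x + y) mod 2^n)) ` Sigma A (\<lambda>x. A \<inter> T x)"
      using \<open>A \<subseteq> L\<close> unfolding C_aaa_def T_def A_def[symmetric] B_def[symmetric] by auto
    moreover have "inj_on (\<lambda>(x, y). (x, y, (x + y) mod 2^n)) (Sigma A (\<lambda>x. A \<inter> T x))"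
      by (auto intro: inj_onI)
    ultimately show ?thesis
      by (simp add: card_image)
  qed
  finally show ?thesis
    by (simp add: algebra_simps)
qed

lemma card_C_aaa_ge_by_S_above:
  fixes n a :: nat and S :: "nat set"
  assumes "1 \<le> a" "a \<le> n"
  defines "A \<equiv> S_layer n S a" and "B \<equiv> S_above n S a" and "L \<equiv> layer n a"
  shows "int (card B) * (2 * int (card A) - int (card L)) \<le> int (card (C_aaa n S a))"
proof -
  define R where "R z = {x \<in> L. (z + 2^n - x) mod 2^n \<in> A}" for z
  have "A \<subseteq> L" "A \<subseteq> {..<2^n}" "finite L"
    using layer_subset_ZN[of n a] finite_layer unfolding A_def L_def S_layer_def ZN_def by auto
  have "B \<subseteq> {..<2^n}"
    using S_above_subset[of n S a] unfolding B_def ZN_def by auto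
  then have "finite B"
    by (rule finite_subset) simp
  have card_R: "card A \<le> card (R z)" if "z \<in> B" for z
  proof (rule card_inj_on_le)
    have "z < 2^n" "2^a dvd z"
      using S_above_subset[of n S a] \<open>B \<subseteq> {..<2^n}\<close> that unfolding B_def by auto
    show "inj_on (\<lambda>y. (z + 2^n - y) mod 2^n) A"
      using inj_on_diff_mod_left[OF \<open>z < 2^n\<close>] \<open>A \<subseteq> {..<2^n}\<close> by (rule inj_on_subset)
    show "(\<lambda>y. (z + 2^n - y) mod 2^n) ` A \<subseteq> R z"
    proof
      fix w assume "w \<in> (\<lambda>y. (z + 2^n - y) mod 2^n) ` A"
      then obtain y where y: "y \<in> A" "w = (z + 2^n - y) mod 2^n"
        by blast
      have "w \<in> L"
        using diff_mod_mem_layer[OF assms(1,2)] \<open>z < 2^n\<close> \<open>2^a dvd z\<close> y \<open>A \<subseteq> L\<close>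
        unfolding L_def by blast
      moreover have "(z + 2^n - w) mod 2^n = y"
        using diff_mod_diff_mod_cancel \<open>z < 2^n\<close> y \<open>A \<subseteq> {..<2^n}\<close> by auto
      ultimately show "w \<in> R z"
        using y(1) unfolding R_def by simp
    qed
    show "finite (R z)"
      using \<open>finite L\<close> unfolding R_def by simp
  qed
  then have "int (card B) * (int (card A) + int (card A) - int (card L))
      \<le> int (card (Sigma B (\<lambda>z. A \<inter> R z)))"
    using \<open>finite L\<close> \<open>A \<subseteq> L\<close> \<open>finite B\<close> card_R
    by (intro card_Sigma_inter_ge) (auto simp: R_def)
  also have "\<dots> = int (card (C_aaa n S a))"
  proof -
    let ?f = "\<lambda>(z, x). (x, (z + 2^n - x) mod 2^n, z)"
    have "C_aaa n S a \<subseteq> ?f ` Sigma B (\<lambda>z. A \<inter> R z)"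
    proof
      fix t assume "t \<in> C_aaa n S a"
      then obtain x y z where t: "t = (x, y, z)" "x \<in> A" "y \<in> A" "z \<in> B" "(x + y) mod 2^n = z"
        unfolding C_aaa_def A_def B_def by auto
      have "x < 2^n" "y < 2^n"
        using t(2,3) \<open>A \<subseteq> {..<2^n}\<close> by auto
      then have "y = (z + 2^n - x) mod 2^n"
        using diff_mod_add_mod_cancel t(5) by metis
      with t \<open>A \<subseteq> L\<close> show "t \<in> ?f ` Sigma B (\<lambda>z. A \<inter> R z)"
        unfolding R_def by (auto intro!: image_eqI[where x = "(z, x)"])
    qed
    moreover have "?f ` Sigma B (\<lambda>z. A \<inter> R z) \<subseteq> C_aaa n S a"
    proof clarify
      fix z x assume "z \<in> B" "x \<in> A" "x \<in> R z"
      have "x < 2^n" "z < 2^n"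
        using \<open>x \<in> A\<close> \<open>z \<in> B\<close> \<open>A \<subseteq> {..<2^n}\<close> \<open>B \<subseteq> {..<2^n}\<close> by auto
      then have "(x + (z + 2^n - x) mod 2^n) mod 2^n = z"
        by (rule add_mod_diff_mod_cancel)
      with \<open>z \<in> B\<close> \<open>x \<in> A\<close> \<open>x \<in> R z\<close> show "(x, (z + 2^n - x) mod 2^n, z) \<in> C_aaa n S a"
        unfolding C_aaa_def R_def A_def B_def by simp
    qed
    moreover have "inj_on ?f (Sigma B (\<lambda>z. A \<inter> R z))"
      by (auto intro: inj_onI)
    ultimately show ?thesis
      by (simp add: card_image subset_antisym)
  qed
  finally show ?thesis
    by (simp add: algebra_simps)
qed

theorem claim4p2:
  fixes n a :: nat and S :: "nat set"
  assumes "n \<ge> 1"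
    and "S \<subseteq> ZN n"
    and "card S = 2^(n-1) + 1"
    and "1 \<le> a" and "a \<le> n"
  shows "int (card (C_aaa n S a)) \<ge>
    max (int (card (S_layer n S a)) * (int (card (S_above n S a)) - int (card (layer n a)) + int (card (S_layer n S a))))
        (max (int (card (S_above n S a)) * (2 * int (card (S_layer n S a)) - int (card (layer n a)))) 0)"
  using card_C_aaa_ge_by_S_layer[OF assms(4,5)] card_C_aaa_ge_by_S_above[OF assms(4,5)] by simp

end
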